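(* Let $\mathcal{A}=\{\alpha_1<\dots<\alpha_m\}\subset(0,1)$ and $d_{\mathcal{A}}=\min_{\alpha\in\mathcal{A}}\min(\alpha,1-\alpha)$. Suppose $|y_t-b_t^{\alpha}|\le R$ for all $\alpha\in\mathcal{A}$ and all $t$, for some $R>0$. Then for each $t$ the MultiQT loss $\ell_t(\theta)=\sum_{\alpha\in\mathcal{A}}\rho_\alpha(b_t^{\alpha}+\theta^{\alpha},y_t)$ is $(h,\phi(h))$-restorative for any $h\ge\frac{R|\mathcal{A}|^{3/2}}{d_{\mathcal{A}}}$, where $\phi(h)=\frac{h\,d_{\mathcal{A}}}{\sqrt{|\mathcal{A}|}}-R|\mathcal{A}|$ (a constant function).
   Context: Quantile loss $\rho_\alpha(\hat y,y)=\alpha|y-\hat y|$ if $y-\hat y\ge0$ and $(1-\alpha)|y-\hat y|$ otherwise. $b_t\in\mathbb{R}^m$ are base forecasts, $y_t\in\mathbb{R}$ outcomes. A loss $\ell$ is $(h,\phi)$-restorative ($h\ge0$, $\phi\ge0$) if all its subgradients $g$ satisfy $\langle\theta,g(\theta)\rangle\ge\phi(\theta)$ whenever $\|\theta\|_2>h$. *)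

theory Defs
  imports "HOL-Analysis.Analysis"
begin

definition quantile_loss :: "real \<Rightarrow> real \<Rightarrow> real \<Rightarrow> real" where
  "quantile_loss a yhat y =
     (if y - yhat \<ge> 0 then a * \<bar>y - yhat\<bar> else (1 - a) * \<bar>y - yhat\<bar>)"

definition is_subgradient :: "('n::real_inner \<Rightarrow> real) \<Rightarrow> 'n \<Rightarrow> 'n \<Rightarrow> bool" where
  "is_subgradient l theta g \<longleftrightarrow> (\<forall>z. l z \<ge> l theta + inner g (z - theta))"

definition restorative :: "real \<Rightarrow> ('n::real_inner \<Rightarrow> real) \<Rightarrow> ('n \<Rightarrow> real) \<Rightarrow> bool" where
  "restorative h phi l \<longleftrightarrow> h \<ge> 0 \<and> (\<forall>theta. phi theta \<ge> 0) \<and>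
     (\<forall>theta g. norm theta > h \<longrightarrow> is_subgradient l theta g \<longrightarrow> inner theta g \<ge> phi theta)"

end

theory Submission
  imports Defs
begin

text \<open>
  Each coordinate of a subgradient of the MultiQT loss is a subgradient of a single shifted
  pinball loss, whose kink lies at the residual \<open>r\<close>, \<open>\<bar>r\<bar> \<le> R\<close>. Testing the subgradient
  inequality at the kink, where the loss vanishes, gives \<open>g (x - r) \<ge> d \<bar>x - r\<bar>\<close>; since
  \<open>\<bar>g\<bar> \<le> 1 - d\<close>, this yields \<open>x g \<ge> d \<bar>x\<bar> - R\<close>. Summing over the coordinates and using
  \<open>\<parallel>\<theta>\<parallel>\<^sub>1 \<ge> \<parallel>\<theta>\<parallel>\<^sub>2\<close> gives \<open>\<langle>\<theta>, g\<rangle> \<ge> d \<parallel>\<theta>\<parallel> - R |\<A>|\<close>, which exceeds \<open>\<phi>(h)\<close> as soon as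
  \<open>\<parallel>\<theta>\<parallel> > h\<close>; the lower bound on \<open>h\<close> is exactly what makes \<open>\<phi>(h) \<ge> 0\<close>.
\<close>

lemma quantile_loss_shift: "quantile_loss a (c + u) y = quantile_loss a u (y - c)"
  unfolding quantile_loss_def by (simp add: algebra_simps)

lemma quantile_loss_at_target [simp]: "quantile_loss a r r = 0"
  unfolding quantile_loss_def by simp

lemma quantile_loss_ge_min_abs: "min a (1 - a) * \<bar>r - u\<bar> \<le> quantile_loss a u r"
  unfolding quantile_loss_def by (auto intro: mult_right_mono)

lemma is_subgradient_real_iff:
  "is_subgradient f x g \<longleftrightarrow> (\<forall>z::real. f x + g * (z - x) \<le> f z)"
  unfolding is_subgradient_def by simp

lemma quantile_loss_subgradient_bounds:
  assumes "is_subgradient (\<lambda>u. quantile_loss a u r) x g"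
  shows "- a \<le> g" and "g \<le> 1 - a"
proof -
  have "quantile_loss a x r + g * (z - x) \<le> quantile_loss a z r" for z
    using assms unfolding is_subgradient_real_iff by blast
  from this[of "x - 1"] this[of "x + 1"] show "- a \<le> g" and "g \<le> 1 - a"
    unfolding quantile_loss_def by (auto split: if_splits simp: abs_if algebra_simps)
qed

lemma quantile_loss_subgradient_restoring:
  assumes sg: "is_subgradient (\<lambda>u. quantile_loss a u r) x g"
    and "0 \<le> d" "d \<le> min a (1 - a)" and "\<bar>r\<bar> \<le> R"
  shows "d * \<bar>x\<bar> - R \<le> x * g"
proof -
  have kink: "quantile_loss a x r + g * (r - x) \<le> 0"
    using sg unfolding is_subgradient_real_iff by (metis quantile_loss_at_target)
  have "d * \<bar>x - r\<bar> \<le> min a (1 - a) * \<bar>r - x\<bar>"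
    using mult_right_mono[OF \<open>d \<le> min a (1 - a)\<close> abs_ge_zero] by (simp add: abs_minus_commute)
  also have "\<dots> \<le> quantile_loss a x r"
    by (rule quantile_loss_ge_min_abs)
  also have "\<dots> \<le> g * (x - r)"
    using kink by (simp add: algebra_simps)
  finally have at_kink: "d * \<bar>x - r\<bar> \<le> g * (x - r)" .
  have "\<bar>g\<bar> \<le> 1 - d"
    using quantile_loss_subgradient_bounds[OF sg] \<open>d \<le> min a (1 - a)\<close> by auto
  then have "\<bar>g * r\<bar> \<le> (1 - d) * R"
    using \<open>\<bar>r\<bar> \<le> R\<close> \<open>0 \<le> d\<close> by (simp add: abs_mult mult_mono)
  moreover have "\<bar>x\<bar> \<le> \<bar>x - r\<bar> + R"
    using abs_triangle_ineq[of "x - r" r] \<open>\<bar>r\<bar> \<le> R\<close> by simp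
  then have "d * \<bar>x\<bar> \<le> d * \<bar>x - r\<bar> + d * R"
    using mult_left_mono \<open>0 \<le> d\<close> by (metis distrib_left)
  ultimately show ?thesis
    using at_kink by (simp add: algebra_simps)
qed

lemma is_subgradient_separable_component:
  fixes F :: "'m::finite \<Rightarrow> real \<Rightarrow> real" and \<theta> g :: "real^'m"
  assumes "is_subgradient (\<lambda>z. \<Sum>j\<in>UNIV. F j (z $ j)) \<theta> g"
  shows "is_subgradient (F i) (\<theta> $ i) (g $ i)"
  unfolding is_subgradient_real_iff
proof
  fix s
  let ?z = "\<theta> + axis i (s - \<theta> $ i)"
  have split: "(\<Sum>j\<in>UNIV. F j (v $ j)) = F i (v $ i) + (\<Sum>j\<in>UNIV - {i}. F j (v $ j))" for v
    by (rule sum.remove) auto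
  have "(\<Sum>j\<in>UNIV - {i}. F j (?z $ j)) = (\<Sum>j\<in>UNIV - {i}. F j (\<theta> $ j))"
    by (rule sum.cong) (auto simp: axis_def)
  moreover have "(\<Sum>j\<in>UNIV. F j (\<theta> $ j)) + inner g (?z - \<theta>) \<le> (\<Sum>j\<in>UNIV. F j (?z $ j))"
    using assms unfolding is_subgradient_def by blast
  ultimately show "F i (\<theta> $ i) + g $ i * (s - \<theta> $ i) \<le> F i s"
    using split[of \<theta>] split[of ?z] by (simp add: inner_axis)
qed

lemma multi_quantile_loss_subgradient_restoring:
  fixes \<alpha> :: "'m::finite \<Rightarrow> real" and c \<theta> g :: "real^'m" and y :: real
  assumes sg: "is_subgradient (\<lambda>z. \<Sum>i\<in>UNIV. quantile_loss (\<alpha> i) (c $ i + z $ i) y) \<theta> g"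
    and "0 \<le> d" "\<And>i. d \<le> min (\<alpha> i) (1 - \<alpha> i)" and "\<And>i. \<bar>y - c $ i\<bar> \<le> R"
  shows "d * norm \<theta> - R * CARD('m) \<le> inner \<theta> g"
proof -
  have "is_subgradient (\<lambda>u. quantile_loss (\<alpha> i) u (y - c $ i)) (\<theta> $ i) (g $ i)" for i
    using is_subgradient_separable_component[OF sg] by (simp add: quantile_loss_shift)
  then have coordinate: "d * \<bar>\<theta> $ i\<bar> - R \<le> \<theta> $ i * g $ i" for i
    using quantile_loss_subgradient_restoring assms(2-4) by blast
  have "d * norm \<theta> \<le> d * (\<Sum>i\<in>UNIV. \<bar>\<theta> $ i\<bar>)"
    using norm_le_l1_cart \<open>0 \<le> d\<close> by (rule mult_left_mono)
  also have "\<dots> - R * CARD('m) = (\<Sum>i\<in>UNIV. d * \<bar>\<theta> $ i\<bar> - R)"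
    by (simp add: sum_subtractf sum_distrib_left)
  also have "\<dots> \<le> (\<Sum>i\<in>UNIV. \<theta> $ i * g $ i)"
    by (rule sum_mono) (rule coordinate)
  also have "\<dots> = inner \<theta> g"
    by (simp add: inner_vec_def)
  finally show ?thesis by simp
qed

lemma multi_quantile_loss_restorative:
  fixes \<alpha> :: "'m::finite \<Rightarrow> real" and c :: "real^'m" and y :: real
  assumes "0 < d" "\<And>i. d \<le> min (\<alpha> i) (1 - \<alpha> i)" and "\<And>i. \<bar>y - c $ i\<bar> \<le> R"
    and "0 \<le> R" and "R * CARD('m) * sqrt CARD('m) \<le> h * d"
  shows "restorative h (\<lambda>_. h * d / sqrt CARD('m) - R * CARD('m))
           (\<lambda>\<theta>. \<Sum>i\<in>UNIV. quantile_loss (\<alpha> i) (c $ i + \<theta> $ i) y)"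
  unfolding restorative_def
proof (intro conjI allI impI)
  let ?n = "real CARD('m)"
  have "sqrt ?n \<ge> 1"
    by simp
  have "0 \<le> R * ?n * sqrt ?n"
    using \<open>0 \<le> R\<close> by simp
  then have "0 \<le> h * d"
    using assms(5) by linarith
  then show "0 \<le> h"
    using \<open>0 < d\<close> by (simp add: zero_le_mult_iff)
  show "0 \<le> h * d / sqrt ?n - R * ?n"
    using assms(5) \<open>sqrt ?n \<ge> 1\<close> by (simp add: pos_le_divide_eq)
  have "h * d / sqrt ?n \<le> h * d"
    using \<open>0 \<le> h * d\<close> \<open>sqrt ?n \<ge> 1\<close> by (simp add: divide_le_eq mult_le_cancel_left1)
  fix \<theta> g :: "real^'m"
  assume "h < norm \<theta>"
    and sg: "is_subgradient (\<lambda>\<theta>. \<Sum>i\<in>UNIV. quantile_loss (\<alpha> i) (c $ i + \<theta> $ i) y) \<theta> g"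
  have "d * norm \<theta> - R * ?n \<le> inner \<theta> g"
    using multi_quantile_loss_subgradient_restoring[OF sg] \<open>0 < d\<close> assms(2,3) by simp
  moreover have "h * d \<le> d * norm \<theta>"
    using \<open>h < norm \<theta>\<close> \<open>0 < d\<close> by (simp add: mult.commute)
  ultimately show "h * d / sqrt ?n - R * ?n \<le> inner \<theta> g"
    using \<open>h * d / sqrt ?n \<le> h * d\<close> by linarith
qed

lemma powr_three_halves: "0 \<le> x \<Longrightarrow> x powr (3/2) = x * sqrt x"
  using powr_add[of x 1 "1/2"] by (cases "x = 0") (simp_all add: powr_half_sqrt)

theorem lemma1:
  fixes \<alpha> :: "'m::finite \<Rightarrow> real"
    and b :: "nat \<Rightarrow> real^'m"
    and y :: "nat \<Rightarrow> real"
    and R h :: real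
  assumes "inj \<alpha>"
    and "\<forall>i. 0 < \<alpha> i \<and> \<alpha> i < 1"
    and "R > 0"
    and "\<forall>t i. \<bar>y t - b t $ i\<bar> \<le> R"
    and "h \<ge> R * real CARD('m) powr (3/2) / Min (range (\<lambda>i. min (\<alpha> i) (1 - \<alpha> i)))"
  shows "\<forall>t. restorative h
           (\<lambda>_. h * Min (range (\<lambda>i. min (\<alpha> i) (1 - \<alpha> i))) / sqrt (real CARD('m))
                 - R * real CARD('m))
           (\<lambda>\<theta>::real^'m. \<Sum>i\<in>UNIV. quantile_loss (\<alpha> i) (b t $ i + \<theta> $ i) (y t))"
proof
  fix t
  define d where "d = Min (range (\<lambda>i. min (\<alpha> i) (1 - \<alpha> i)))"
  have "d > 0"
    unfolding d_def using assms(2) by (subst Min_gr_iff) auto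
  moreover have "d \<le> min (\<alpha> i) (1 - \<alpha> i)" for i
    unfolding d_def by (rule Min_le) auto
  moreover have "R * CARD('m) * sqrt CARD('m) \<le> h * d"
    using assms(5) \<open>d > 0\<close> by (simp add: powr_three_halves pos_divide_le_eq d_def)
  ultimately show "restorative h (\<lambda>_. h * d / sqrt CARD('m) - R * CARD('m))
      (\<lambda>\<theta>::real^'m. \<Sum>i\<in>UNIV. quantile_loss (\<alpha> i) (b t $ i + \<theta> $ i) (y t))"
    using assms(3,4) by (intro multi_quantile_loss_restorative) auto
qed

end
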